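(* Let $\nu_n,\nu\in\Delta(V)$ with $\nu_n\to\nu$ weakly. Then $\pi^*(c,\nu)\le\liminf_{n\to\infty}\pi^*(c,\nu_n)$.
   Context: $V\subset\mathbb{R}$ is compact and $c:V\to\mathbb{R}$ is continuous with $v-c(v)\ge0$ on $V$. $\Delta(V)$ denotes Borel probability measures on $V$. For $\nu\in\Delta(V)$ and $p\in V$, $\pi(c,\nu,p)=\int_{\{v\ge p\}}(p-c(v))\nu(dv)$ and $\pi^*(c,\nu)=\max_{p\in V}\pi(c,\nu,p)$. *)

theory Defs
  imports "HOL-Probability.Probability"
begin

definition Delta :: "real set \<Rightarrow> real measure set" where
  "Delta V = {M. prob_space M \<and> sets M = sets (restrict_space borel V)}"

definition weak_conv_on :: "real set \<Rightarrow> (nat \<Rightarrow> real measure) \<Rightarrow> real measure \<Rightarrow> bool" where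
  "weak_conv_on V Ms M \<longleftrightarrow>
     (\<forall>f :: real \<Rightarrow> real. continuous_on V f \<and> bounded (f ` V) \<longrightarrow>
        (\<lambda>n. integral\<^sup>L (Ms n) f) \<longlonglongrightarrow> integral\<^sup>L M f)"

definition profit :: "(real \<Rightarrow> real) \<Rightarrow> real set \<Rightarrow> real measure \<Rightarrow> real \<Rightarrow> real" where
  "profit c V \<nu> p = (LINT v:{v\<in>V. p \<le> v}|\<nu>. p - c v)"

text \<open>pi^*(c,nu) = max over p in V of pi(c,nu,p); written as a supremum (the maximum
  is attained, so this agrees with the paper's max).\<close>
definition profit_star :: "(real \<Rightarrow> real) \<Rightarrow> real set \<Rightarrow> real measure \<Rightarrow> real" where
  "profit_star c V \<nu> = (SUP p\<in>V. profit c V \<nu> p)"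

end

theory Submission
  imports Defs
begin

text \<open>For a < p the integrand of \<open>\<pi>(c, -, p)\<close> lies below the continuous function
  \<open>g v = ramp a p v * (p - c v)\<close>, because \<open>p - c v \<ge> v - c v \<ge> 0\<close> on the ramp. Choosing
  a and a price q \<in> V within d below p such that V has no points in (a, q), also \<open>g - d\<close> lies
  below the integrand at price q. Hence \<open>\<pi>(c,\<nu>,p) \<le> \<integral>g d\<nu> = lim \<integral>g d\<nu>\<^sub>n \<le> liminf \<pi>*(c,\<nu>\<^sub>n) + d\<close>.\<close>

lemma sets_Delta: "M \<in> Delta V \<Longrightarrow> sets M = sets (restrict_space borel V)"
  unfolding Delta_def by simp

lemma prob_space_Delta: "M \<in> Delta V \<Longrightarrow> prob_space M"
  unfolding Delta_def by simp

lemma space_Delta: "M \<in> Delta V \<Longrightarrow> space M = V"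
  using sets_eq_imp_space_eq[OF sets_Delta] by (simp add: space_restrict_space)

lemma integrable_Delta_continuous:
  fixes f :: "real \<Rightarrow> real"
  assumes "M \<in> Delta V" "compact V" "continuous_on V f"
  shows "integrable M f"
proof -
  interpret prob_space M using prob_space_Delta[OF assms(1)] .
  obtain B where B: "\<forall>v\<in>V. norm (f v) \<le> B"
    using compact_imp_bounded[OF compact_continuous_image[OF assms(3,2)]]
    unfolding bounded_iff by auto
  have "f \<in> borel_measurable M"
    using borel_measurable_continuous_on_restrict[OF assms(3)]
    by (simp add: measurable_cong_sets[OF sets_Delta[OF assms(1)] refl])
  then show ?thesis
    using B by (intro integrable_const_bound[where B=B]) (auto simp: space_Delta[OF assms(1)])
qed

lemma upper_set_in_sets_Delta: "M \<in> Delta V \<Longrightarrow> {v\<in>V. p \<le> v} \<in> sets M"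
proof -
  assume "M \<in> Delta V"
  have "{v\<in>V. p \<le> v} = V \<inter> {p..}" by auto
  then show ?thesis
    by (simp add: sets_Delta[OF \<open>M \<in> Delta V\<close>] sets_restrict_space)
qed

lemma profit_eq_integral: "profit c V M p = (LINT v|M. indicator {v\<in>V. p \<le> v} v * (p - c v))"
  unfolding profit_def set_lebesgue_integral_def by simp

lemma integrable_profit:
  assumes "M \<in> Delta V" "compact V" "continuous_on V c"
  shows "integrable M (\<lambda>v. indicator {v\<in>V. p \<le> v} v * (p - c v))"
  using integrable_mult_indicator[OF upper_set_in_sets_Delta[OF assms(1)]
      integrable_Delta_continuous[OF assms(1,2)], of "\<lambda>v. p - c v"] assms(3)
  by (simp add: continuous_on_diff continuous_on_const)


lemma bdd_above_profit:
  assumes "M \<in> Delta V" "compact V" "continuous_on V c"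
  shows "bdd_above (profit c V M ` V)"
proof -
  interpret prob_space M using prob_space_Delta[OF assms(1)] .
  obtain B1 where B1: "\<forall>v\<in>V. \<bar>v\<bar> \<le> B1"
    using compact_imp_bounded[OF assms(2)] unfolding bounded_iff by auto
  obtain B2 where B2: "\<forall>v\<in>V. \<bar>c v\<bar> \<le> B2"
    using compact_imp_bounded[OF compact_continuous_image[OF assms(3,2)]]
    unfolding bounded_iff by auto
  have "profit c V M p \<le> B1 + B2" if "p \<in> V" for p
    unfolding profit_eq_integral
  proof (rule integral_le_const[OF integrable_profit[OF assms]], rule AE_I2)
    fix v assume "v \<in> space M"
    then have "\<bar>p - c v\<bar> \<le> B1 + B2"
      using B1 B2 that space_Delta[OF assms(1)] by fastforce
    then show "indicator {v\<in>V. p \<le> v} v * (p - c v) \<le> B1 + B2"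
      by (auto simp: indicator_def)
  qed
  then show ?thesis by (meson bdd_above.I2)
qed

lemma profit_le_profit_star:
  assumes "M \<in> Delta V" "compact V" "continuous_on V c" "p \<in> V"
  shows "profit c V M p \<le> profit_star c V M"
  unfolding profit_star_def using bdd_above_profit[OF assms(1-3)] assms(4)
  by (rule cSUP_upper2) simp

definition ramp :: "real \<Rightarrow> real \<Rightarrow> real \<Rightarrow> real" where
  "ramp a b v = max 0 (min 1 ((v - a) / (b - a)))"

lemma continuous_on_ramp: "a < b \<Longrightarrow> continuous_on S (ramp a b)"
  unfolding ramp_def by (intro continuous_intros) auto

lemma ramp_nonneg: "0 \<le> ramp a b v"
  and ramp_le_one: "ramp a b v \<le> 1"
  unfolding ramp_def by auto

lemma ramp_eq_0: "a < b \<Longrightarrow> v \<le> a \<Longrightarrow> ramp a b v = 0"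
  unfolding ramp_def by (simp add: divide_nonpos_pos)

lemma ramp_eq_1: "a < b \<Longrightarrow> b \<le> v \<Longrightarrow> ramp a b v = 1"
  unfolding ramp_def by simp

lemma indicator_le_ramp:
  fixes p v w :: real
  assumes "a < p" "w \<le> v"
  shows "indicator {p..} v * (p - w) \<le> ramp a p v * (p - w)"
  using assms ramp_eq_1[OF assms(1)] ramp_nonneg[of a p v] by (cases "p \<le> v") auto

lemma ramp_le_indicator:
  fixes p q v w :: real
  assumes "a < p" "a \<le> q" "q \<le> p" "p - q \<le> d" "w \<le> v" "a < v \<Longrightarrow> q \<le> v"
  shows "ramp a p v * (p - w) - d \<le> indicator {q..} v * (q - w)"
proof (cases "a < v")
  case True
  have "ramp a p v * (p - w) \<le> p - w"
  proof (cases "p \<le> v")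
    case False
    then have "0 \<le> p - w" using assms(5) by simp
    then show ?thesis using ramp_le_one[of a p v] by (simp add: mult_left_le_one_le ramp_nonneg)
  qed (simp add: ramp_eq_1[OF assms(1)])
  then show ?thesis using True assms by simp
next
  case False
  then show ?thesis using assms ramp_eq_0[OF assms(1)] by (simp add: indicator_def)
qed

lemma gap_below:
  fixes p d :: real
  assumes "p \<in> V" "0 < d"
  obtains a q where "a < p" "a \<le> q" "q \<le> p" "p - q \<le> d" "q \<in> V" "\<forall>v\<in>V. a < v \<longrightarrow> q \<le> v"
proof (cases "\<exists>q\<in>V. p - d < q \<and> q < p")
  case True
  then obtain q where "q \<in> V" "p - d < q" "q < p" by blast
  then show ?thesis using that[of q q] by force
next
  case False
  then show ?thesis using that[of "p - d" p] assms by force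
qed


lemma profit_le_integral_ramp:
  assumes "M \<in> Delta V" "compact V" "continuous_on V c" "\<forall>v\<in>V. c v \<le> v" "a < p"
  shows "profit c V M p \<le> (LINT v|M. ramp a p v * (p - c v))"
  unfolding profit_eq_integral
proof (rule integral_mono[OF integrable_profit[OF assms(1-3)]])
  show "integrable M (\<lambda>v. ramp a p v * (p - c v))"
    using assms by (intro integrable_Delta_continuous continuous_intros continuous_on_ramp)
  fix v assume "v \<in> space M"
  then have "v \<in> V" using space_Delta[OF assms(1)] by simp
  then show "indicator {v\<in>V. p \<le> v} v * (p - c v) \<le> ramp a p v * (p - c v)"
    using indicator_le_ramp[OF assms(5), of "c v" v] assms(4) by (simp add: indicator_def)
qed

lemma integral_ramp_le_profit:
  assumes "M \<in> Delta V" "compact V" "continuous_on V c" "\<forall>v\<in>V. c v \<le> v"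
    and "a < p" "a \<le> q" "q \<le> p" "p - q \<le> d" "\<forall>v\<in>V. a < v \<longrightarrow> q \<le> v"
  shows "(LINT v|M. ramp a p v * (p - c v)) - d \<le> profit c V M q"
proof -
  interpret prob_space M using prob_space_Delta[OF assms(1)] .
  have int: "integrable M (\<lambda>v. ramp a p v * (p - c v))"
    using assms by (intro integrable_Delta_continuous continuous_intros continuous_on_ramp)
  have "(LINT v|M. ramp a p v * (p - c v)) - d = (LINT v|M. ramp a p v * (p - c v) - d)"
    using int by (simp add: prob_space)
  also have "\<dots> \<le> profit c V M q"
    unfolding profit_eq_integral
  proof (rule integral_mono[OF _ integrable_profit[OF assms(1-3)]])
    show "integrable M (\<lambda>v. ramp a p v * (p - c v) - d)" using int by simp
    fix v assume "v \<in> space M"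
    then have "v \<in> V" using space_Delta[OF assms(1)] by simp
    then show "ramp a p v * (p - c v) - d \<le> indicator {v\<in>V. q \<le> v} v * (q - c v)"
      using ramp_le_indicator[OF assms(5-8), of "c v" v] assms(4,9) by (simp add: indicator_def)
  qed
  finally show ?thesis .
qed

lemma eventually_profit_less_profit_star:
  assumes "compact V" "continuous_on V c" "\<forall>v\<in>V. c v \<le> v"
    and "\<forall>n. \<nu>s n \<in> Delta V" "\<nu> \<in> Delta V" "weak_conv_on V \<nu>s \<nu>"
    and "p \<in> V" "0 < e"
  shows "\<forall>\<^sub>F n in sequentially. profit c V \<nu> p - e < profit_star c V (\<nu>s n)"
proof -
  obtain a q where aq: "a < p" "a \<le> q" "q \<le> p" "p - q \<le> e / 2" "q \<in> V"
    "\<forall>v\<in>V. a < v \<longrightarrow> q \<le> v"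
    using gap_below[OF assms(7), of "e / 2"] assms(8) by auto
  define g where "g v = ramp a p v * (p - c v)" for v
  have "continuous_on V g"
    unfolding g_def using aq(1) assms(2) by (intro continuous_intros continuous_on_ramp)
  moreover have "bounded (g ` V)"
    by (rule compact_imp_bounded[OF compact_continuous_image[OF calculation assms(1)]])
  ultimately have "(\<lambda>n. integral\<^sup>L (\<nu>s n) g) \<longlonglongrightarrow> integral\<^sup>L \<nu> g"
    using assms(6) unfolding weak_conv_on_def by blast
  then have "\<forall>\<^sub>F n in sequentially. integral\<^sup>L \<nu> g - e / 2 < integral\<^sup>L (\<nu>s n) g"
    using assms(8) by (intro order_tendstoD(1)) auto
  then show ?thesis
  proof eventually_elim
    case (elim n)
    have "profit c V \<nu> p \<le> integral\<^sup>L \<nu> g"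
      unfolding g_def by (rule profit_le_integral_ramp[OF assms(5,1-3) aq(1)])
    also have "\<dots> < integral\<^sup>L (\<nu>s n) g + e / 2" using elim by simp
    also have "\<dots> \<le> profit c V (\<nu>s n) q + e"
      using integral_ramp_le_profit[OF assms(4)[rule_format, of n] assms(1-3) aq(1-4,6)]
      unfolding g_def by linarith
    also have "\<dots> \<le> profit_star c V (\<nu>s n) + e"
      using profit_le_profit_star[OF assms(4)[rule_format] assms(1,2) aq(5)] by simp
    finally show ?case by simp
  qed
qed

theorem lemmaI4:
  fixes V :: "real set" and c :: "real \<Rightarrow> real"
    and \<nu>s :: "nat \<Rightarrow> real measure" and \<nu> :: "real measure"
  assumes "compact V"
    and "continuous_on V c"
    and "\<forall>v\<in>V. v - c v \<ge> 0"
    and "\<forall>n. \<nu>s n \<in> Delta V"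
    and "\<nu> \<in> Delta V"
    and "weak_conv_on V \<nu>s \<nu>"
  shows "ereal (profit_star c V \<nu>) \<le> liminf (\<lambda>n. ereal (profit_star c V (\<nu>s n)))"
proof (rule ereal_le_real)
  fix z assume liminf_le: "liminf (\<lambda>n. ereal (profit_star c V (\<nu>s n))) \<le> ereal z"
  have c_le: "\<forall>v\<in>V. c v \<le> v" using assms(3) by simp
  have "profit c V \<nu> p \<le> z" if "p \<in> V" for p
  proof (rule field_le_epsilon)
    fix e :: real assume "0 < e"
    have "ereal (profit c V \<nu> p - e) \<le> liminf (\<lambda>n. ereal (profit_star c V (\<nu>s n)))"
      using eventually_profit_less_profit_star[OF assms(1,2) c_le assms(4-6) that \<open>0 < e\<close>]
      by (intro Liminf_bounded) (auto elim: eventually_mono)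
    then have "ereal (profit c V \<nu> p - e) \<le> ereal z" using liminf_le by (rule order_trans)
    then show "profit c V \<nu> p \<le> z + e" by simp
  qed
  moreover have "V \<noteq> {}"
    using prob_space.not_empty[OF prob_space_Delta[OF assms(5)]] space_Delta[OF assms(5)] by simp
  ultimately show "ereal (profit_star c V \<nu>) \<le> ereal z"
    unfolding profit_star_def by (simp add: cSUP_least)
qed

end
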